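(* Fix $\rho_r\in(0,1)$, $\rho_w\in(0,1/2)$, $\epsilon>0$ with $\rho_r<1-h(\rho_w)-2\epsilon$. Fix a view $V\in\{0,1,?\}^n$ with $\rho_r n$ non-$?$ coordinates and $e\in\{0,1\}^n$ of Hamming weight at most $\rho_w n$. Let $S_r$ consist of $2^{\epsilon n/4}$ independent uniformly random elements of the set of strings consistent with $V$. Then with probability $1-\exp(-\Omega(n^2))$ over the choice of $S_r$, there are at most $O(n^4)\cdot2^{\epsilon n/8}$ elements $x\in S_r$ such that the Hamming ball of radius $\rho_w n$ around $x+e$ contains another element of $S_r$.
   Context: $h$ is the binary entropy function. A string $x$ is consistent with $V=(v_i)$ if $x_i=v_i$ whenever $v_i\ne ?$. *)

theory Defs
  imports "HOL-Probability.Probability"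
begin

definition bin_entropy :: "real \<Rightarrow> real" where
  "bin_entropy p = - p * log 2 p - (1 - p) * log 2 (1 - p)"

definition hdist :: "bool list \<Rightarrow> bool list \<Rightarrow> nat" where
  "hdist x y = card {i. i < length x \<and> x ! i \<noteq> y ! i}"

definition hweight :: "bool list \<Rightarrow> nat" where
  "hweight x = card {i. i < length x \<and> x ! i}"

definition xor_str :: "bool list \<Rightarrow> bool list \<Rightarrow> bool list" where
  "xor_str x y = map2 (\<noteq>) x y"

text \<open>A view is a list over {0,1,?}: None stands for ?.\<close>
definition consistent :: "bool option list \<Rightarrow> bool list set" where
  "consistent V = {x. length x = length V \<and>
       (\<forall>i < length V. V ! i \<noteq> None \<longrightarrow> x ! i = the (V ! i))}"

definition nonq_count :: "bool option list \<Rightarrow> nat" where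
  "nonq_count V = card {i. i < length V \<and> V ! i \<noteq> None}"

definition bad_count :: "real \<Rightarrow> bool list \<Rightarrow> bool list list \<Rightarrow> nat" where
  "bad_count r e S = card {i. i < length S \<and>
       (\<exists>j < length S. j \<noteq> i \<and> real (hdist (S ! j) (xor_str (S ! i) e)) \<le> r)}"

end

theory Submission
  imports Defs
begin

text \<open>
  Call position i of the sample S bad if S!j lies within distance \<open>\<rho>w n\<close> of S!i + e for some
  j \<noteq> i. Every bad position is related either to a later or to an earlier sample, so it suffices
  to count "forward hits" in S and in its reversal, which has the same distribution.
  For a fixed y and a uniform x consistent with V, the string y lies near x + e only if x lies in
  the Hamming ball of radius \<open>\<rho>w n\<close> around y + e, which has at most \<open>2^(h(\<rho>w) n)\<close> points,
  among \<open>2^((1 - \<rho>r) n)\<close> consistent strings; so this happens with probability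
  \<open>q \<le> 2^(-2\<epsilon>n)\<close>, whatever e is. Drawing the M samples one after another, each new sample
  creates a hit with probability at most M q, which gives \<open>P(at least t hits) \<le> (M\<^sup>2 q)^t\<close>.
  With \<open>M \<le> 2^(\<epsilon>n/4)\<close> and t = n this is \<open>2^(-\<Omega>(n\<^sup>2))\<close>, so with that probability fewer than
  2n samples are bad, well below the claimed bound.
\<close>

fun forward_hits :: "('a \<Rightarrow> 'a \<Rightarrow> bool) \<Rightarrow> 'a list \<Rightarrow> nat" where
  "forward_hits R [] = 0"
| "forward_hits R (x # xs) = of_bool (\<exists>y\<in>set xs. R x y) + forward_hits R xs"

lemma bex_set_conv_nth: "(\<exists>y\<in>set xs. P y) \<longleftrightarrow> (\<exists>j<length xs. P (xs ! j))"
  using all_set_conv_all_nth[of xs "\<lambda>y. \<not> P y"] by auto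

lemma card_forward_hits:
  "card {i. i < length xs \<and> (\<exists>j<length xs. i < j \<and> R (xs ! i) (xs ! j))} = forward_hits R xs"
proof (induction xs)
  case (Cons x xs)
  let ?A = "{i. i < length xs \<and> (\<exists>j<length xs. i < j \<and> R (xs ! i) (xs ! j))}"
  have "{i. i < length (x # xs) \<and> (\<exists>j<length (x # xs). i < j \<and> R ((x # xs) ! i) ((x # xs) ! j))}
      = {i. i = 0 \<and> (\<exists>y\<in>set xs. R x y)} \<union> Suc ` ?A"
  proof (rule set_eqI)
    fix i
    show "i \<in> {i. i < length (x # xs) \<and> (\<exists>j<length (x # xs). i < j \<and> R ((x # xs) ! i) ((x # xs) ! j))}
      \<longleftrightarrow> i \<in> {i. i = 0 \<and> (\<exists>y\<in>set xs. R x y)} \<union> Suc ` ?A"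
    proof (cases i)
      case 0
      then show ?thesis
        by (simp add: Ex_less_Suc2 bex_set_conv_nth)
    next
      case (Suc k)
      then show ?thesis
        by (simp add: Ex_less_Suc2 inj_image_mem_iff)
    qed
  qed
  then show ?case
    using Cons by (simp add: card_image)
qed simp

lemma card_backward_hits:
  "card {i. i < length xs \<and> (\<exists>j<i. R (xs ! i) (xs ! j))} = forward_hits R (rev xs)"
proof (induction xs rule: rev_induct)
  case (snoc x xs)
  let ?B = "{i. i < length xs \<and> (\<exists>j<i. R (xs ! i) (xs ! j))}"
  have "{i. i < length (xs @ [x]) \<and> (\<exists>j<i. R ((xs @ [x]) ! i) ((xs @ [x]) ! j))}
      = ?B \<union> {i. i = length xs \<and> (\<exists>y\<in>set xs. R x y)}"
  proof (rule set_eqI)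
    fix i
    consider "i < length xs" | "i = length xs" | "length xs < i"
      by linarith
    then show "i \<in> {i. i < length (xs @ [x]) \<and> (\<exists>j<i. R ((xs @ [x]) ! i) ((xs @ [x]) ! j))}
      \<longleftrightarrow> i \<in> ?B \<union> {i. i = length xs \<and> (\<exists>y\<in>set xs. R x y)}"
      by cases (simp_all add: nth_append bex_set_conv_nth cong: conj_cong)
  qed
  then show ?case
    using snoc by (simp add: card_insert_if)
qed simp

lemma card_related_le_forward_hits:
  "card {i. i < length xs \<and> (\<exists>j<length xs. j \<noteq> i \<and> R (xs ! i) (xs ! j))}
     \<le> forward_hits R xs + forward_hits R (rev xs)"
proof -
  let ?later = "{i. i < length xs \<and> (\<exists>j<length xs. i < j \<and> R (xs ! i) (xs ! j))}"
  let ?earlier = "{i. i < length xs \<and> (\<exists>j<i. R (xs ! i) (xs ! j))}"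
  have "{i. i < length xs \<and> (\<exists>j<length xs. j \<noteq> i \<and> R (xs ! i) (xs ! j))} \<subseteq> ?later \<union> ?earlier"
    by (auto simp: nat_neq_iff)
  then have "card {i. i < length xs \<and> (\<exists>j<length xs. j \<noteq> i \<and> R (xs ! i) (xs ! j))}
      \<le> card (?later \<union> ?earlier)"
    by (rule card_mono[rotated]) simp
  also have "\<dots> \<le> card ?later + card ?earlier"
    by (rule card_Un_le)
  also have "\<dots> = forward_hits R xs + forward_hits R (rev xs)"
    by (simp only: card_forward_hits card_backward_hits)
  finally show ?thesis .
qed

lemma replicate_pmf_Suc_snoc:
  "replicate_pmf (Suc n) p = bind_pmf (replicate_pmf n p) (\<lambda>xs. map_pmf (\<lambda>x. xs @ [x]) p)"
  using replicate_pmf_distrib[of n 1 p]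
  by (simp add: replicate_pmf_1 map_pmf_def bind_assoc_pmf bind_return_pmf)

lemma map_pmf_rev_replicate_pmf: "map_pmf rev (replicate_pmf n p) = replicate_pmf n p"
proof (induction n)
  case (Suc n)
  have "map_pmf rev (replicate_pmf (Suc n) p)
      = bind_pmf p (\<lambda>x. bind_pmf (map_pmf rev (replicate_pmf n p)) (\<lambda>xs. return_pmf (xs @ [x])))"
    by (simp add: map_pmf_def bind_assoc_pmf bind_return_pmf)
  also have "\<dots> = bind_pmf (replicate_pmf n p) (\<lambda>xs. bind_pmf p (\<lambda>x. return_pmf (xs @ [x])))"
    using Suc by (simp add: bind_commute_pmf[of p])
  also have "\<dots> = replicate_pmf (Suc n) p"
    by (simp add: replicate_pmf_Suc_snoc map_pmf_def del: replicate_pmf.simps)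
  finally show ?case .
qed simp

lemma replicate_pmf_Suc_Cons:
  "replicate_pmf (Suc n) p = bind_pmf (replicate_pmf n p) (\<lambda>xs. map_pmf (\<lambda>x. x # xs) p)"
  by (simp add: map_pmf_def bind_commute_pmf[of p])

context
  fixes p :: "'a pmf" and R :: "'a \<Rightarrow> 'a \<Rightarrow> bool" and q :: real
  assumes prob_related_le: "\<And>y. y \<in> set_pmf p \<Longrightarrow> measure_pmf.prob p {x. R x y} \<le> q"
    and q_nonneg: "0 \<le> q"
begin

lemma prob_new_forward_hit_le:
  assumes "set xs \<subseteq> set_pmf p" "length xs \<le> M"
  shows "measure_pmf.prob p {x. Suc t \<le> forward_hits R (x # xs)}
    \<le> real M * q * indicator {xs. t \<le> forward_hits R xs} xs
      + indicator {xs. Suc t \<le> forward_hits R xs} xs"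
proof -
  consider "Suc t \<le> forward_hits R xs" | "forward_hits R xs = t" | "forward_hits R xs < t"
    by linarith
  then show ?thesis
  proof cases
    case 1
    then show ?thesis
      using q_nonneg measure_pmf.prob_le_1[of p] by (simp add: add_increasing)
  next
    case 2
    have "measure_pmf.prob p {x. Suc t \<le> forward_hits R (x # xs)}
        \<le> measure_pmf.prob p (\<Union>y\<in>set xs. {x. R x y})"
      using 2 by (intro measure_pmf.finite_measure_mono) auto
    also have "\<dots> \<le> (\<Sum>y\<in>set xs. measure_pmf.prob p {x. R x y})"
      by (intro measure_pmf.finite_measure_subadditive_finite) auto
    also have "\<dots> \<le> (\<Sum>y\<in>set xs. q)"
      using assms(1) by (intro sum_mono prob_related_le) auto
    also have "\<dots> \<le> real M * q"
      using card_length[of xs] assms(2) q_nonneg by (simp add: mult_right_mono)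
    finally show ?thesis
      using 2 by simp
  next
    case 3
    then have "{x. Suc t \<le> forward_hits R (x # xs)} = {}"
      by auto
    then show ?thesis
      using q_nonneg by simp
  qed
qed

lemma prob_forward_hits_Suc_le:
  "measure_pmf.prob (replicate_pmf (Suc M) p) {xs. Suc t \<le> forward_hits R xs}
    \<le> real M * q * measure_pmf.prob (replicate_pmf M p) {xs. t \<le> forward_hits R xs}
      + measure_pmf.prob (replicate_pmf M p) {xs. Suc t \<le> forward_hits R xs}"
proof -
  let ?P = "replicate_pmf M p"
  let ?A = "{xs. t \<le> forward_hits R xs}" and ?B = "{xs. Suc t \<le> forward_hits R xs}"
  have "emeasure (measure_pmf (replicate_pmf (Suc M) p)) ?B
      = (\<integral>\<^sup>+xs. emeasure (measure_pmf p) {x. Suc t \<le> forward_hits R (x # xs)} \<partial>measure_pmf ?P)"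
    unfolding replicate_pmf_Suc_Cons by (simp add: vimage_def)
  also have "\<dots> \<le> (\<integral>\<^sup>+xs. ennreal (real M * q) * indicator ?A xs + indicator ?B xs \<partial>measure_pmf ?P)"
  proof (rule nn_integral_mono_AE, unfold AE_measure_pmf_iff, rule ballI)
    fix xs assume "xs \<in> set_pmf ?P"
    then have "set xs \<subseteq> set_pmf p" "length xs \<le> M"
      by (auto simp: set_replicate_pmf)
    then have "measure_pmf.prob p {x. Suc t \<le> forward_hits R (x # xs)}
        \<le> real M * q * indicator ?A xs + indicator ?B xs"
      by (rule prob_new_forward_hit_le)
    then have "ennreal (measure_pmf.prob p {x. Suc t \<le> forward_hits R (x # xs)})
        \<le> ennreal (real M * q * indicator ?A xs + indicator ?B xs)"
      by (rule ennreal_leI)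
    also have "\<dots> = ennreal (real M * q) * indicator ?A xs + indicator ?B xs"
      using q_nonneg by (simp add: ennreal_plus split: split_indicator)
    finally show "emeasure (measure_pmf p) {x. Suc t \<le> forward_hits R (x # xs)}
        \<le> ennreal (real M * q) * indicator ?A xs + indicator ?B xs"
      unfolding measure_pmf.emeasure_eq_measure .
  qed
  also have "\<dots> = ennreal (real M * q) * emeasure (measure_pmf ?P) ?A + emeasure (measure_pmf ?P) ?B"
    by (simp add: nn_integral_add nn_integral_cmult)
  also have "\<dots> = ennreal (real M * q * measure_pmf.prob ?P ?A + measure_pmf.prob ?P ?B)"
    using q_nonneg by (simp add: measure_pmf.emeasure_eq_measure ennreal_mult ennreal_plus)
  finally have "ennreal (measure_pmf.prob (replicate_pmf (Suc M) p) ?B)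
      \<le> ennreal (real M * q * measure_pmf.prob ?P ?A + measure_pmf.prob ?P ?B)"
    unfolding measure_pmf.emeasure_eq_measure .
  moreover have "0 \<le> real M * q * measure_pmf.prob ?P ?A + measure_pmf.prob ?P ?B"
    using q_nonneg by simp
  ultimately show ?thesis
    by (rule ennreal_le_iff[THEN iffD1, rotated])
qed

lemma prob_forward_hits_ge_le:
  "measure_pmf.prob (replicate_pmf M p) {xs. t \<le> forward_hits R xs} \<le> (real M ^ 2 * q) ^ t"
proof (induction M arbitrary: t)
  case 0
  then show ?case by (cases t) auto
next
  case (Suc M)
  show ?case
  proof (cases t)
    case (Suc s)
    define A where "A = real M ^ 2 * q"
    define B where "B = real (Suc M) ^ 2 * q"
    have "0 \<le> A" "A \<le> B" "real M * q + A \<le> B"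
      using q_nonneg
      by (simp_all add: A_def B_def power2_eq_square algebra_simps mult_right_mono)
    have "measure_pmf.prob (replicate_pmf (Suc M) p) {xs. Suc s \<le> forward_hits R xs}
        \<le> real M * q * A ^ s + A ^ Suc s"
    proof -
      have "real M * q * measure_pmf.prob (replicate_pmf M p) {xs. s \<le> forward_hits R xs}
          \<le> real M * q * A ^ s"
        using Suc.IH[of s] q_nonneg by (simp add: A_def mult_left_mono)
      then show ?thesis
        using prob_forward_hits_Suc_le[of M s] Suc.IH[of "Suc s"] unfolding A_def by linarith
    qed
    also have "\<dots> = (real M * q + A) * A ^ s"
      by (simp add: algebra_simps)
    also have "\<dots> \<le> B * B ^ s"
      using \<open>0 \<le> A\<close> \<open>A \<le> B\<close> \<open>real M * q + A \<le> B\<close>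
      by (intro mult_mono power_mono) auto
    finally show ?thesis
      by (simp add: Suc B_def)
  qed simp
qed

lemma prob_related_count_ge_le:
  "measure_pmf.prob (replicate_pmf M p)
     {xs. 2 * t \<le> card {i. i < length xs \<and> (\<exists>j<length xs. j \<noteq> i \<and> R (xs ! i) (xs ! j))}}
   \<le> 2 * (real M ^ 2 * q) ^ t"
proof -
  let ?P = "replicate_pmf M p"
  have "measure_pmf.prob ?P
     {xs. 2 * t \<le> card {i. i < length xs \<and> (\<exists>j<length xs. j \<noteq> i \<and> R (xs ! i) (xs ! j))}}
     \<le> measure_pmf.prob ?P ({xs. t \<le> forward_hits R xs} \<union> rev -` {xs. t \<le> forward_hits R xs})"
  proof (intro measure_pmf.finite_measure_mono subsetI)
    fix xs
    assume "xs \<in> {xs. 2 * t \<le> card {i. i < length xs \<and> (\<exists>j<length xs. j \<noteq> i \<and> R (xs ! i) (xs ! j))}}"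
    then have "2 * t \<le> card {i. i < length xs \<and> (\<exists>j<length xs. j \<noteq> i \<and> R (xs ! i) (xs ! j))}"
      by simp
    then have "t \<le> forward_hits R xs \<or> t \<le> forward_hits R (rev xs)"
      using card_related_le_forward_hits[of xs R] by linarith
    then show "xs \<in> {xs. t \<le> forward_hits R xs} \<union> rev -` {xs. t \<le> forward_hits R xs}"
      by simp
  qed simp
  also have "\<dots> \<le> measure_pmf.prob ?P {xs. t \<le> forward_hits R xs}
      + measure_pmf.prob (map_pmf rev ?P) {xs. t \<le> forward_hits R xs}"
    by (simp add: measure_Un_le)
  also have "\<dots> \<le> 2 * (real M ^ 2 * q) ^ t"
    using prob_forward_hits_ge_le[of M t] by (simp add: map_pmf_rev_replicate_pmf)
  finally show ?thesis .
qed

end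

lemma two_powr_mult_log:
  assumes "0 < x"
  shows "2 powr (real k * log 2 x) = x ^ k"
proof -
  have "2 powr (real k * log 2 x) = (2 powr log 2 x) powr real k"
    by (simp add: powr_powr mult.commute)
  then show ?thesis
    using assms by (simp add: powr_realpow)
qed

lemma bin_entropy_weight_le:
  fixes p :: real and n j :: nat
  assumes p: "0 < p" "p < 1/2" and j: "real j \<le> p * real n" "j \<le> n"
  shows "2 powr (- bin_entropy p * real n) \<le> p ^ j * (1 - p) ^ (n - j)"
proof -
  have "log 2 p \<le> log 2 (1 - p)"
    using p by simp
  have "- bin_entropy p * real n = real n * log 2 (1 - p) - p * real n * (log 2 (1 - p) - log 2 p)"
    by (simp add: bin_entropy_def algebra_simps)
  also have "\<dots> \<le> real n * log 2 (1 - p) - real j * (log 2 (1 - p) - log 2 p)"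
    using j \<open>log 2 p \<le> log 2 (1 - p)\<close> by (intro diff_left_mono mult_right_mono) auto
  also have "\<dots> = real j * log 2 p + real (n - j) * log 2 (1 - p)"
    using j by (simp add: of_nat_diff algebra_simps)
  finally have "2 powr (- bin_entropy p * real n)
      \<le> 2 powr (real j * log 2 p + real (n - j) * log 2 (1 - p))"
    by simp
  also have "\<dots> = p ^ j * (1 - p) ^ (n - j)"
    using p by (simp add: powr_add two_powr_mult_log)
  finally show ?thesis .
qed

lemma sum_binomial_le_bin_entropy:
  fixes p :: real and n k :: nat
  assumes p: "0 < p" "p < 1/2" and k: "real k \<le> p * real n"
  shows "real (\<Sum>j\<le>k. n choose j) \<le> 2 powr (bin_entropy p * real n)"
proof -
  have "k \<le> n"
    using k p mult_left_le_one_le[of "real n" p] by linarith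
  have "real (\<Sum>j\<le>k. n choose j) * 2 powr (- bin_entropy p * real n)
      \<le> (\<Sum>j\<le>k. real (n choose j) * (p ^ j * (1 - p) ^ (n - j)))"
    unfolding of_nat_sum sum_distrib_right
    using p k \<open>k \<le> n\<close> by (intro sum_mono mult_left_mono bin_entropy_weight_le) auto
  also have "\<dots> \<le> (\<Sum>j\<le>n. real (n choose j) * (p ^ j * (1 - p) ^ (n - j)))"
    using p \<open>k \<le> n\<close> by (intro sum_mono2) auto
  also have "\<dots> = 1"
    using binomial_ring[of p "1 - p" n] by (simp add: mult.assoc)
  finally have "real (\<Sum>j\<le>k. n choose j) \<le> 1 / 2 powr (- bin_entropy p * real n)"
    by (simp add: pos_le_divide_eq)
  then show ?thesis
    by (simp add: powr_minus_divide)
qed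

lemma card_hamming_ball_le:
  assumes "length c = n"
  shows "card {x. length x = n \<and> hdist x c \<le> k} \<le> (\<Sum>j\<le>k. n choose j)"
proof -
  define diff where "diff x = {i. i < n \<and> x ! i \<noteq> c ! i}" for x :: "bool list"
  let ?ball = "{x. length x = n \<and> hdist x c \<le> k}"
  let ?subsets = "\<Union>j\<le>k. {B. B \<subseteq> {..<n} \<and> card B = j}"
  have "inj_on diff ?ball"
  proof (rule inj_onI, rule nth_equalityI)
    fix x y i
    assume "x \<in> ?ball" "y \<in> ?ball" "diff x = diff y" "i < length x"
    then have "i \<in> diff x \<longleftrightarrow> i \<in> diff y" "i < n"
      by simp_all
    then show "x ! i = y ! i"
      unfolding diff_def by blast
  qed simp
  have "diff ` ?ball \<subseteq> ?subsets"
  proof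
    fix B assume "B \<in> diff ` ?ball"
    then obtain x where x: "x \<in> ?ball" "B = diff x"
      by blast
    then have "card B = hdist x c"
      by (simp add: hdist_def diff_def)
    moreover have "B \<subseteq> {..<n}"
      using x by (auto simp: diff_def)
    ultimately show "B \<in> ?subsets"
      using x by (intro UN_I[of "card B"]) auto
  qed
  have "?subsets \<subseteq> Pow {..<n}"
    by blast
  then have "finite ?subsets"
    by (rule finite_subset) simp
  have "card ?ball = card (diff ` ?ball)"
    using \<open>inj_on diff ?ball\<close> by (rule card_image[symmetric])
  also have "\<dots> \<le> card ?subsets"
    by (rule card_mono) fact+
  also have "\<dots> \<le> (\<Sum>j\<le>k. card {B. B \<subseteq> {..<n} \<and> card B = j})"
    by (rule card_UN_le) simp
  finally show ?thesis
    by (simp add: n_subsets)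
qed

lemma consistent_Nil: "consistent [] = {[]}"
  by (auto simp: consistent_def)

lemma consistent_Cons:
  "consistent (v # V) = (\<lambda>(a, x). a # x) ` ((if v = None then UNIV else {the v}) \<times> consistent V)"
  (is "_ = _ ` (?T \<times> _)")
proof (intro set_eqI iffI)
  fix y assume y: "y \<in> consistent (v # V)"
  then obtain a x where ax: "y = a # x"
    by (cases y) (auto simp: consistent_def)
  have "a \<in> ?T"
    using y ax by (force simp: consistent_def)
  moreover have "x \<in> consistent V"
    using y ax by (force simp: consistent_def)
  ultimately show "y \<in> (\<lambda>(a, x). a # x) ` (?T \<times> consistent V)"
    using ax by auto
next
  fix y assume "y \<in> (\<lambda>(a, x). a # x) ` (?T \<times> consistent V)"
  then obtain a x where "y = a # x" "a \<in> ?T" "x \<in> consistent V"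
    by auto
  then show "y \<in> consistent (v # V)"
    by (auto simp: consistent_def nth_Cons split: nat.splits if_splits)
qed

lemma finite_consistent: "finite (consistent V)"
  by (induction V) (simp_all add: consistent_Nil consistent_Cons)

lemma card_consistent: "card (consistent V) = 2 ^ (length V - nonq_count V)"
proof -
  have "card (consistent V) = 2 ^ length (filter (\<lambda>v. v = None) V)"
  proof (induction V)
    case (Cons v V)
    have "inj_on (\<lambda>(a, x). a # x) ((if v = None then UNIV else {the v}) \<times> consistent V)"
      by (auto simp: inj_on_def)
    then show ?case
      using Cons finite_consistent[of V]
      by (simp add: consistent_Cons card_image card_cartesian_product)
  qed (simp add: consistent_Nil)
  moreover have "nonq_count V = length (filter (\<lambda>v. v \<noteq> None) V)"
    by (simp add: nonq_count_def length_filter_conv_card)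
  ultimately show ?thesis
    using sum_length_filter_compl[of "\<lambda>v. v = None" V] by simp
qed

lemma hdist_xor_str_swap:
  assumes "length y = length x" "length e = length x"
  shows "hdist y (xor_str x e) = hdist x (xor_str y e)"
proof -
  have "{i. i < length y \<and> y ! i \<noteq> xor_str x e ! i} = {i. i < length x \<and> x ! i \<noteq> xor_str y e ! i}"
    using assms by (auto simp: xor_str_def)
  then show ?thesis
    by (simp add: hdist_def)
qed

lemma prob_shifted_ball_le:
  fixes p :: real
  assumes p: "0 < p" "p < 1/2" and y: "y \<in> consistent V" and e: "length e = length V"
  shows "measure_pmf.prob (pmf_of_set (consistent V))
      {x. real (hdist y (xor_str x e)) \<le> p * real (length V)}
    \<le> 2 powr (bin_entropy p * real (length V)) / 2 ^ (length V - nonq_count V)"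
proof -
  define n where "n = length V"
  define k where "k = nat \<lfloor>p * real n\<rfloor>"
  define D where "D = consistent V"
  let ?E = "{x. real (hdist y (xor_str x e)) \<le> p * real n}"
  have len: "length x = n" if "x \<in> D" for x
    using that by (simp add: D_def n_def consistent_def)
  have "D \<noteq> {}"
    using y by (auto simp: D_def)
  have "D \<inter> ?E \<subseteq> {x. length x = n \<and> hdist x (xor_str y e) \<le> k}"
  proof (intro subsetI)
    fix x assume x: "x \<in> D \<inter> ?E"
    then have "hdist y (xor_str x e) = hdist x (xor_str y e)"
      using y e len by (intro hdist_xor_str_swap) (auto simp: D_def n_def)
    then show "x \<in> {x. length x = n \<and> hdist x (xor_str y e) \<le> k}"
      using x len by (auto simp: k_def le_nat_floor)
  qed
  then have "card (D \<inter> ?E) \<le> card {x. length x = n \<and> hdist x (xor_str y e) \<le> k}"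
    by (rule card_mono[rotated]) (auto intro: finite_subset[OF _ finite_list_length[of n]])
  also have "\<dots> \<le> (\<Sum>j\<le>k. n choose j)"
    using y e by (intro card_hamming_ball_le) (simp add: xor_str_def n_def consistent_def)
  finally have "real (card (D \<inter> ?E)) \<le> real (\<Sum>j\<le>k. n choose j)"
    by (simp only: of_nat_le_iff)
  also have "\<dots> \<le> 2 powr (bin_entropy p * real n)"
    using p by (intro sum_binomial_le_bin_entropy) (auto simp: k_def)
  finally have "real (card (D \<inter> ?E)) \<le> 2 powr (bin_entropy p * real n)" .
  moreover have "measure_pmf.prob (pmf_of_set D) ?E = real (card (D \<inter> ?E)) / card D"
    using \<open>D \<noteq> {}\<close> by (simp add: measure_pmf_of_set finite_consistent D_def)
  ultimately show ?thesis
    by (simp add: D_def n_def card_consistent divide_right_mono)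
qed

lemma prob_bad_count_ge_le:
  fixes p :: real
  assumes "0 < p" "p < 1/2" "length e = length V"
  shows "measure_pmf.prob (replicate_pmf M (pmf_of_set (consistent V)))
      {S. 2 * t \<le> bad_count (p * real (length V)) e S}
    \<le> 2 * (real M ^ 2 * (2 powr (bin_entropy p * real (length V)) / 2 ^ (length V - nonq_count V))) ^ t"
proof -
  have "consistent V \<noteq> {}"
    using card_consistent[of V] by auto
  then have "measure_pmf.prob (pmf_of_set (consistent V))
      {x. real (hdist y (xor_str x e)) \<le> p * real (length V)}
    \<le> 2 powr (bin_entropy p * real (length V)) / 2 ^ (length V - nonq_count V)"
    if "y \<in> set_pmf (pmf_of_set (consistent V))" for y
    using that assms by (intro prob_shifted_ball_le) (auto simp: finite_consistent)
  then show ?thesis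
    unfolding bad_count_def by (rule prob_related_count_ge_le) (auto intro: divide_nonneg_nonneg)
qed

lemma entropy_ball_ratio_le:
  fixes \<rho> h \<epsilon> :: real and k n :: nat
  assumes "real k = \<rho> * real n" "\<rho> < 1" "\<rho> < 1 - h - 2 * \<epsilon>"
  shows "2 powr (h * real n) / 2 ^ (n - k) \<le> 2 powr (- 2 * \<epsilon> * real n)"
proof -
  have "\<rho> * real n \<le> real n"
    using assms(2) mult_right_mono[of \<rho> 1 "real n"] by simp
  then have "k \<le> n"
    using assms(1) by simp
  then have "2 powr (h * real n) / 2 ^ (n - k) = 2 powr ((h + \<rho> - 1) * real n)"
    using assms(1) by (simp add: powr_realpow[symmetric] of_nat_diff powr_diff[symmetric] algebra_simps)
  also have "\<dots> \<le> 2 powr (- 2 * \<epsilon> * real n)"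
    using assms(3) mult_right_mono[of "h + \<rho> - 1" "- 2 * \<epsilon>" "real n"] by simp
  finally show ?thesis .
qed

lemma collision_tail_le_exp:
  fixes \<epsilon> q :: real and M n :: nat
  assumes "0 \<le> q" "q \<le> 2 powr (- 2 * \<epsilon> * real n)" "real M \<le> 2 powr (\<epsilon> * real n / 4)"
    and "0 \<le> \<epsilon>" "2 \<le> \<epsilon> * real n"
  shows "2 * (real M ^ 2 * q) ^ n \<le> exp (- (\<epsilon> * ln 2) * real n ^ 2)"
proof -
  have "real M ^ 2 \<le> (2 powr (\<epsilon> * real n / 4)) ^ 2"
    using assms(3) by (intro power_mono) auto
  also have "\<dots> = 2 powr (\<epsilon> * real n / 2)"
    by (simp add: powr_realpow[symmetric] powr_powr)
  finally have "real M ^ 2 * q \<le> 2 powr (\<epsilon> * real n / 2) * 2 powr (- 2 * \<epsilon> * real n)"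
    using assms(1,2) by (intro mult_mono) auto
  also have "\<dots> = 2 powr (- (3/2) * \<epsilon> * real n)"
    by (simp flip: powr_add; simp add: algebra_simps)
  finally have "(real M ^ 2 * q) ^ n \<le> (2 powr (- (3/2) * \<epsilon> * real n)) ^ n"
    using assms(1) by (intro power_mono) auto
  also have "\<dots> = 2 powr (- (3/2) * \<epsilon> * real n ^ 2)"
    by (simp add: powr_realpow[symmetric] powr_powr power2_eq_square algebra_simps)
  finally have "2 * (real M ^ 2 * q) ^ n \<le> 2 powr (1 - (3/2) * \<epsilon> * real n ^ 2)"
    by (simp add: powr_diff powr_minus_divide)
  also have "\<dots> \<le> 2 powr (- \<epsilon> * real n ^ 2)"
  proof -
    have "real n \<le> real n ^ 2"
      by (cases n) (simp_all add: power2_eq_square)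
    then have "\<epsilon> * real n \<le> \<epsilon> * real n ^ 2"
      using assms(4) by (rule mult_left_mono)
    then show ?thesis
      using assms(5) by simp
  qed
  also have "\<dots> = exp (- (\<epsilon> * ln 2) * real n ^ 2)"
    by (simp add: powr_def)
  finally show ?thesis .
qed

lemma double_le_power4_mult_powr:
  fixes n :: nat and a :: real
  assumes "2 \<le> n" "0 \<le> a"
  shows "2 * real n \<le> real n ^ 4 * 2 powr a"
proof -
  have "2 * real n \<le> real n ^ 2"
    using assms(1) by (simp add: power2_eq_square mult_right_mono)
  also have "\<dots> \<le> real n ^ 4"
    using assms(1) by (intro power_increasing) auto
  also have "\<dots> \<le> real n ^ 4 * 2 powr a"
    using assms(2) mult_left_mono[of 1 "2 powr a" "real n ^ 4"] by (simp add: ge_one_powr_ge_zero)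
  finally show ?thesis .
qed

lemma prob_ge_one_minus_if_compl_subset:
  assumes "measure_pmf.prob p A \<le> \<delta>" "- A \<subseteq> B"
  shows "1 - \<delta> \<le> measure_pmf.prob p B"
proof -
  have "1 - \<delta> \<le> measure_pmf.prob p (- A)"
    using assms(1) measure_pmf.prob_compl[of A p] by (simp add: Compl_eq_Diff_UNIV)
  also have "\<dots> \<le> measure_pmf.prob p B"
    using assms(2) by (rule measure_pmf.finite_measure_mono) simp
  finally show ?thesis .
qed

theorem lemma4p9:
  fixes \<rho>r \<rho>w \<epsilon> :: real
  assumes "0 < \<rho>r" "\<rho>r < 1" "0 < \<rho>w" "\<rho>w < 1/2" "0 < \<epsilon>"
    and "\<rho>r < 1 - bin_entropy \<rho>w - 2 * \<epsilon>"
  shows "\<exists>C > 0. \<exists>c > 0. \<exists>N. \<forall>n \<ge> N. \<forall>(V :: bool option list) (e :: bool list).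
           length V = n \<longrightarrow> real (nonq_count V) = \<rho>r * real n \<longrightarrow>
           length e = n \<longrightarrow> real (hweight e) \<le> \<rho>w * real n \<longrightarrow>
           measure_pmf.prob
             (replicate_pmf (nat \<lfloor>2 powr (\<epsilon> * real n / 4)\<rfloor>) (pmf_of_set (consistent V)))
             {S. real (bad_count (\<rho>w * real n) e S) \<le> C * real n ^ 4 * 2 powr (\<epsilon> * real n / 8)}
           \<ge> 1 - exp (- c * real n ^ 2)"
proof (rule exI[of _ 1], rule conjI, simp, rule exI[of _ "\<epsilon> * ln 2"], rule conjI, simp add: assms(5),
    rule exI[of _ "nat \<lceil>2 / \<epsilon>\<rceil> + 2"], intro allI impI)
  fix n :: nat and V :: "bool option list" and e :: "bool list"
  assume n: "nat \<lceil>2 / \<epsilon>\<rceil> + 2 \<le> n" and V: "length V = n" "real (nonq_count V) = \<rho>r * real n"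
    and e: "length e = n" and "real (hweight e) \<le> \<rho>w * real n"
  define M where "M = nat \<lfloor>2 powr (\<epsilon> * real n / 4)\<rfloor>"
  define q where "q = 2 powr (bin_entropy \<rho>w * real n) / 2 ^ (n - nonq_count V)"
  have "real (nat \<lceil>2 / \<epsilon>\<rceil>) \<le> real n"
    using n by (intro of_nat_mono) linarith
  with real_nat_ceiling_ge[of "2 / \<epsilon>"] have "2 / \<epsilon> \<le> real n"
    by (rule order_trans)
  then have "2 \<le> \<epsilon> * real n"
    using assms(5) by (simp add: pos_divide_le_eq mult.commute)
  have "q \<le> 2 powr (- 2 * \<epsilon> * real n)"
    unfolding q_def using V(2) assms(2,6) by (rule entropy_ball_ratio_le)
  then have "measure_pmf.prob (replicate_pmf M (pmf_of_set (consistent V)))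
      {S. 2 * n \<le> bad_count (\<rho>w * real n) e S} \<le> exp (- (\<epsilon> * ln 2) * real n ^ 2)"
    using prob_bad_count_ge_le[of \<rho>w e V M n] collision_tail_le_exp[of q \<epsilon> n M] \<open>2 \<le> \<epsilon> * real n\<close>
      V(1) e assms(3-5) by (simp add: q_def M_def)
  moreover have "2 * real n \<le> real n ^ 4 * 2 powr (\<epsilon> * real n / 8)"
    using n assms(5) by (intro double_le_power4_mult_powr) auto
  ultimately show "1 - exp (- (\<epsilon> * ln 2) * real n ^ 2) \<le> measure_pmf.prob
      (replicate_pmf (nat \<lfloor>2 powr (\<epsilon> * real n / 4)\<rfloor>) (pmf_of_set (consistent V)))
      {S. real (bad_count (\<rho>w * real n) e S) \<le> 1 * real n ^ 4 * 2 powr (\<epsilon> * real n / 8)}"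
    unfolding M_def by (elim prob_ge_one_minus_if_compl_subset) auto
qed

end
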